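(* Let $N\ge 1$. The set of all positive integers $n$ whose Chung–Graham decomposition has coefficient $c_N=0$ (i.e. contains neither $F_{2N}$ nor $2F_{2N}$) is $$B_{2N}=\{1,2,\dots,F_{2N}-1\}\cup\bigcup_{k=N+1}^{\infty}\left\{\,j+F_{2k},\ \ j+(n+2)F_{2k}+\left\lfloor\frac{n+1}{\phi}\right\rfloor F_{2k-1}\ :\ 0\le j\le F_{2N}-1,\ n\ge 0\right\},$$ where $\phi=(1+\sqrt5)/2$.
   Context: Fibonacci numbers: $F_1=F_2=1$, $F_{n+1}=F_n+F_{n-1}$ for $n\ge2$. Chung–Graham decomposition: every positive integer $n$ has a unique representation $n=\sum_{i\ge1}c_iF_{2i}$ with $c_i\in\{0,1,2\}$, only finitely many nonzero, such that whenever $c_i=c_j=2$ with $i<j$ there is $k$ with $i<k<j$ and $c_k=0$ (call this the Chung–Graham condition). $\lfloor\cdot\rfloor$ is the floor function. *)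

theory Defs
  imports Complex_Main "HOL-Number_Theory.Fib"
begin

text \<open>Fibonacci numbers: library fib with fib 1 = fib 2 = 1.
  A coefficient sequence c (indexed from 1; c 0 = 0 by convention) is a
  Chung-Graham decomposition of n.\<close>

definition CG_rep :: "nat \<Rightarrow> (nat \<Rightarrow> nat) \<Rightarrow> bool" where
  "CG_rep n c \<longleftrightarrow>
     c 0 = 0 \<and> (\<forall>i. c i \<le> 2) \<and> finite {i. c i \<noteq> 0} \<and>
     n = (\<Sum>i\<in>{i. c i \<noteq> 0}. c i * fib (2 * i)) \<and>
     (\<forall>i j. i < j \<longrightarrow> c i = 2 \<longrightarrow> c j = 2 \<longrightarrow> (\<exists>k. i < k \<and> k < j \<and> c k = 0))"

definition CG_decomp :: "nat \<Rightarrow> (nat \<Rightarrow> nat)" where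
  "CG_decomp n = (THE c. CG_rep n c)"

definition phi :: real where
  "phi = (1 + sqrt 5) / 2"

end

theory Submission
  imports Defs
begin

(* Split the Chung-Graham digits of n at the position N where c_N = 0.  The digits below N
  form an arbitrary admissible block, and such blocks realise exactly the values j < F_2N.
  The digits above N start at the least index k > N with c_k <> 0; shifting them down to
  start at 0 gives an admissible sequence d with d_0 >= 1, and F_2(k+t) = F_2t+1 F_2k + F_2t F_2k-1
  shows that they contribute A F_2k + B F_2k-1 with A = sum d_t F_2t+1 and B = sum d_t F_2t.
  Since F_n+1 - phi F_n = (1 - phi)^n, we get A - phi B = sum d_t phi^(-2t), and the
  Chung-Graham condition confines this to the open interval (1, phi^2) unless d = (1, 0, 0, ...).
  Hence either (A, B) = (1, 0) or B = floor ((A - 1) / phi), and every A >= 2 occurs because a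
  greedy construction represents every positive integer by odd-indexed Fibonacci numbers. *)

definition CG_admissible :: "(nat \<Rightarrow> nat) \<Rightarrow> bool" where
  "CG_admissible c \<longleftrightarrow> (\<forall>i. c i \<le> 2) \<and>
     (\<forall>i j. i < j \<longrightarrow> c i = 2 \<longrightarrow> c j = 2 \<longrightarrow> (\<exists>k. i < k \<and> k < j \<and> c k = 0))"

definition CG_digits :: "nat \<Rightarrow> (nat \<Rightarrow> nat) \<Rightarrow> bool" where
  "CG_digits K c \<longleftrightarrow> CG_admissible c \<and> (\<forall>i\<ge>K. c i = 0)"

(* Exactly the condition under which a digit 2 may be placed at position K. *)
definition zero_after_twos :: "nat \<Rightarrow> (nat \<Rightarrow> nat) \<Rightarrow> bool" where
  "zero_after_twos K c \<longleftrightarrow> (\<forall>i<K. c i = 2 \<longrightarrow> (\<exists>j. i < j \<and> j < K \<and> c j = 0))"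

definition zero_before_twos :: "(nat \<Rightarrow> nat) \<Rightarrow> bool" where
  "zero_before_twos c \<longleftrightarrow> (\<forall>i. c i = 2 \<longrightarrow> (\<exists>j<i. c j = 0))"

definition digit_sum :: "(nat \<Rightarrow> nat) \<Rightarrow> (nat \<Rightarrow> nat) \<Rightarrow> nat \<Rightarrow> nat" where
  "digit_sum w c K = (\<Sum>i<K. c i * w i)"

abbreviation CG_value :: "(nat \<Rightarrow> nat) \<Rightarrow> nat \<Rightarrow> nat" where
  "CG_value \<equiv> digit_sum (\<lambda>i. fib (2 * i))"

abbreviation odd_fib_value :: "(nat \<Rightarrow> nat) \<Rightarrow> nat \<Rightarrow> nat" where
  "odd_fib_value \<equiv> digit_sum (\<lambda>i. fib (2 * i + 1))"

definition shift_digits :: "nat \<Rightarrow> (nat \<Rightarrow> nat) \<Rightarrow> nat \<Rightarrow> nat" where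
  "shift_digits k d i = (if k \<le> i then d (i - k) else 0)"

lemma CG_digits_le_2: "CG_digits K c \<Longrightarrow> c i \<le> 2"
  unfolding CG_digits_def CG_admissible_def by blast

lemma CG_digits_mono: "CG_digits k c \<Longrightarrow> k \<le> K \<Longrightarrow> CG_digits K c"
  unfolding CG_digits_def by auto

lemma CG_digits_update:
  assumes "CG_digits k c" "x \<le> 2" "x = 2 \<Longrightarrow> zero_after_twos k c"
  shows "CG_digits (Suc k) (c(k := x))"
  unfolding CG_digits_def CG_admissible_def
proof (intro conjI allI impI)
  fix i j assume ij: "i < j" and two: "(c(k := x)) i = 2" "(c(k := x)) j = 2"
  have above: "c l = 0" if "k < l" for l using assms(1) that unfolding CG_digits_def by auto
  have "i \<le> k" "j \<le> k" using two above[of i] above[of j] by (auto split: if_splits intro: leI)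
  show "\<exists>l. i < l \<and> l < j \<and> (c(k := x)) l = 0"
  proof (cases "j = k")
    case True
    with ij two obtain l where "i < l" "l < k" "c l = 0"
      using assms(3) unfolding zero_after_twos_def by auto
    with True show ?thesis by auto
  next
    case False
    with ij two \<open>j \<le> k\<close> have "c i = 2" "c j = 2" by auto
    with ij obtain l where "i < l" "l < j" "c l = 0"
      using assms(1) unfolding CG_digits_def CG_admissible_def by blast
    with False \<open>j \<le> k\<close> show ?thesis by (intro exI[of _ l]) auto
  qed
qed (use assms in \<open>auto simp: CG_digits_def CG_admissible_def\<close>)

lemma CG_admissible_restrict:
  assumes "CG_admissible c"
  shows "CG_admissible (\<lambda>i. if P i then c i else 0)"
  unfolding CG_admissible_def
proof (intro conjI allI impI)
  fix i j assume "i < j" "(if P i then c i else 0) = 2" "(if P j then c j else 0) = 2"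
  then have "c i = 2" "c j = 2" by (auto split: if_splits)
  with \<open>i < j\<close> obtain l where "i < l" "l < j" "c l = 0"
    using assms unfolding CG_admissible_def by blast
  then show "\<exists>l. i < l \<and> l < j \<and> (if P l then c l else 0) = 0" by auto
qed (use assms in \<open>simp add: CG_admissible_def\<close>)

lemma CG_admissible_shift: "CG_admissible c \<Longrightarrow> CG_admissible (\<lambda>t. c (t + k))"
  unfolding CG_admissible_def
proof (intro conjI allI impI; elim conjE)
  fix i j assume twos: "\<forall>i j. i < j \<longrightarrow> c i = 2 \<longrightarrow> c j = 2 \<longrightarrow> (\<exists>l. i < l \<and> l < j \<and> c l = 0)"
    and "i < j" "c (i + k) = 2" "c (j + k) = 2"
  then obtain l where "i + k < l" "l < j + k" "c l = 0" by (meson add_less_mono1)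
  then show "\<exists>l. i < l \<and> l < j \<and> c (l + k) = 0" by (intro exI[of _ "l - k"]) auto
qed auto

lemma zero_after_twos_cong:
  assumes "\<And>j. j < k \<Longrightarrow> c' j = c j"
  shows "zero_after_twos k c' \<longleftrightarrow> zero_after_twos k c"
  unfolding zero_after_twos_def using assms by fastforce

lemma zero_after_twos_update: "k \<le> i \<Longrightarrow> zero_after_twos k (c(i := x)) \<longleftrightarrow> zero_after_twos k c"
  by (rule zero_after_twos_cong) simp

lemma zero_after_twos_Suc_iff:
  "zero_after_twos (Suc k) c \<longleftrightarrow> c k \<noteq> 2 \<and> (c k = 0 \<or> zero_after_twos k c)"
  unfolding zero_after_twos_def by (auto simp: less_Suc_eq)

lemma digit_sum_update:
  "\<forall>i\<ge>k. c i = 0 \<Longrightarrow> digit_sum w (c(k := x)) (Suc k) = digit_sum w c k + x * w k"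
  unfolding digit_sum_def by simp

lemma digit_sum_eq_lessThan:
  "\<forall>i\<ge>k. c i = 0 \<Longrightarrow> k \<le> K \<Longrightarrow> digit_sum w c K = digit_sum w c k"
  unfolding digit_sum_def by (rule sum.mono_neutral_right) auto

lemma digit_sum_add: "digit_sum w (\<lambda>i. c i + c' i) K = digit_sum w c K + digit_sum w c' K"
  unfolding digit_sum_def by (simp add: sum.distrib distrib_right)

lemma CG_digits_drop_top: "CG_digits (Suc K) c \<Longrightarrow> CG_digits K (c(K := 0))"
proof -
  assume "CG_digits (Suc K) c"
  moreover have "c(K := 0) = (\<lambda>i. if i \<noteq> K then c i else 0)" by auto
  ultimately show ?thesis
    using CG_admissible_restrict[of c] unfolding CG_digits_def by (auto simp: Suc_le_eq)
qed

lemma CG_digits_single: "x \<le> 2 \<Longrightarrow> CG_digits 1 ((\<lambda>_. 0)(0 := x))"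
  unfolding CG_digits_def CG_admissible_def by auto

lemma zero_after_twos_of_two: "CG_admissible c \<Longrightarrow> c k = 2 \<Longrightarrow> zero_after_twos k c"
  unfolding CG_admissible_def zero_after_twos_def by blast

lemma digit_sum_greedy_step:
  assumes w_Suc: "w (Suc k) = 2 * w k + u k" and u_Suc: "u (Suc k) = w k + u k"
    and P_update: "\<And>c x. P c \<Longrightarrow> P (c(k := x))"
    and IH_w: "\<And>x. x < w k \<Longrightarrow> \<exists>c. CG_digits k c \<and> P c \<and> digit_sum w c k = x + \<delta>"
    and IH_u: "\<And>x. x < u k \<Longrightarrow>
      \<exists>c. CG_digits k c \<and> P c \<and> zero_after_twos k c \<and> digit_sum w c k = x + \<delta>"
  shows "x < w (Suc k) \<Longrightarrow> \<exists>c. CG_digits (Suc k) c \<and> P c \<and> digit_sum w c (Suc k) = x + \<delta>"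
    and "x < u (Suc k) \<Longrightarrow>
      \<exists>c. CG_digits (Suc k) c \<and> P c \<and> zero_after_twos (Suc k) c \<and> digit_sum w c (Suc k) = x + \<delta>"
proof -
  have extend: "CG_digits (Suc k) (c(k := a)) \<and> P (c(k := a)) \<and>
      digit_sum w (c(k := a)) (Suc k) = y + a * w k + \<delta> \<and>
      (zero_after_twos (Suc k) (c(k := a)) \<longleftrightarrow> a = 0 \<or> a = 1 \<and> zero_after_twos k c)"
    if "CG_digits k c" "P c" "digit_sum w c k = y + \<delta>" "a \<le> 2" "a = 2 \<Longrightarrow> zero_after_twos k c"
    for c y a
  proof (intro conjI)
    show "CG_digits (Suc k) (c(k := a))" using CG_digits_update that by blast
    show "P (c(k := a))" using P_update that(2) .
    have "\<forall>i\<ge>k. c i = 0" using that(1) unfolding CG_digits_def by blast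
    then show "digit_sum w (c(k := a)) (Suc k) = y + a * w k + \<delta>"
      using digit_sum_update that(3) by simp
    show "zero_after_twos (Suc k) (c(k := a)) \<longleftrightarrow> a = 0 \<or> a = 1 \<and> zero_after_twos k c"
      using that(4) zero_after_twos_Suc_iff[of k "c(k := a)"] zero_after_twos_update[of k k c a]
      by auto
  qed
  show "\<exists>c. CG_digits (Suc k) c \<and> P c \<and> digit_sum w c (Suc k) = x + \<delta>" if x_less: "x < w (Suc k)"
  proof -
    consider "x < w k" | "w k \<le> x" "x < 2 * w k" | "2 * w k \<le> x" "x < 2 * w k + u k"
      using x_less w_Suc by (cases "x < w k"; cases "x < 2 * w k") auto
    then show ?thesis
    proof cases
      case 1
      then obtain c where "CG_digits k c" "P c" "digit_sum w c k = x + \<delta>" using IH_w by blast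
      with extend[of c x 0] show ?thesis by (intro exI[of _ "c(k := 0)"]) simp
    next
      case 2
      then have "x - w k < w k" by linarith
      then obtain c where "CG_digits k c" "P c" "digit_sum w c k = (x - w k) + \<delta>"
        using IH_w by blast
      with extend[of c "x - w k" 1] 2 show ?thesis by (intro exI[of _ "c(k := 1)"]) simp
    next
      case 3
      then have "x - 2 * w k < u k" by linarith
      then obtain c where "CG_digits k c" "P c" "zero_after_twos k c"
          "digit_sum w c k = (x - 2 * w k) + \<delta>"
        using IH_u by blast
      with extend[of c "x - 2 * w k" 2] 3 show ?thesis by (intro exI[of _ "c(k := 2)"]) simp
    qed
  qed
  show "\<exists>c. CG_digits (Suc k) c \<and> P c \<and> zero_after_twos (Suc k) c \<and>
      digit_sum w c (Suc k) = x + \<delta>" if x_less: "x < u (Suc k)"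
  proof (cases "x < w k")
    case True
    then obtain c where "CG_digits k c" "P c" "digit_sum w c k = x + \<delta>" using IH_w by blast
    with extend[of c x 0] show ?thesis by (intro exI[of _ "c(k := 0)"]) simp
  next
    case False
    with x_less u_Suc have "x - w k < u k" by linarith
    then obtain c where "CG_digits k c" "P c" "zero_after_twos k c"
        "digit_sum w c k = (x - w k) + \<delta>"
      using IH_u by blast
    with extend[of c "x - w k" 1] False show ?thesis by (intro exI[of _ "c(k := 1)"]) simp
  qed
qed

(* The weight u k bounds the values that leave room for a digit 2 at position k.  The offset
  \<delta> = 1 is used for the odd-indexed weights, where a - 1 is represented with d 0 \<ge> 1. *)
lemma digit_sum_greedy:
  assumes "k0 \<le> K" "x < w K"
    and w_Suc: "\<And>k. k0 \<le> k \<Longrightarrow> w (Suc k) = 2 * w k + u k"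
    and u_Suc: "\<And>k. k0 \<le> k \<Longrightarrow> u (Suc k) = w k + u k"
    and P_update: "\<And>c k x. k0 \<le> k \<Longrightarrow> P c \<Longrightarrow> P (c(k := x))"
    and base_w: "\<And>x. x < w k0 \<Longrightarrow> \<exists>c. CG_digits k0 c \<and> P c \<and> digit_sum w c k0 = x + \<delta>"
    and base_u: "\<And>x. x < u k0 \<Longrightarrow>
      \<exists>c. CG_digits k0 c \<and> P c \<and> zero_after_twos k0 c \<and> digit_sum w c k0 = x + \<delta>"
  shows "\<exists>c. CG_digits K c \<and> P c \<and> digit_sum w c K = x + \<delta>"
proof -
  have "(\<forall>x < w K. \<exists>c. CG_digits K c \<and> P c \<and> digit_sum w c K = x + \<delta>) \<and>
    (\<forall>x < u K. \<exists>c. CG_digits K c \<and> P c \<and> zero_after_twos K c \<and> digit_sum w c K = x + \<delta>)"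
    using \<open>k0 \<le> K\<close>
  proof (induction K rule: dec_induct)
    case base
    then show ?case using base_w base_u by blast
  next
    case (step k)
    then show ?case
      using digit_sum_greedy_step[of w k u P \<delta>] w_Suc u_Suc P_update by blast
  qed
  with \<open>x < w K\<close> show ?thesis by blast
qed

lemma fib_even_Suc:
  assumes "1 \<le> k"
  shows "fib (2 * Suc k) = 2 * fib (2 * k) + fib (2 * k - 1)"
    and "fib (2 * Suc k - 1) = fib (2 * k) + fib (2 * k - 1)"
  using assms by (cases k; simp)+

lemma CG_value_representable:
  assumes "1 \<le> k" "n < fib (2 * k)"
  shows "\<exists>c. CG_digits k c \<and> c 0 = 0 \<and> CG_value c k = n"
proof -
  have zero: "CG_digits 1 (\<lambda>_. 0) \<and> (\<lambda>_. 0::nat) 0 = 0 \<and> zero_after_twos 1 (\<lambda>_. 0) \<and>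
      CG_value (\<lambda>_. 0) 1 = 0"
    by (simp add: CG_digits_def CG_admissible_def zero_after_twos_def digit_sum_def)
  show ?thesis
    using digit_sum_greedy[of 1 k n "\<lambda>i. fib (2 * i)" "\<lambda>i. fib (2 * i - 1)" "\<lambda>c. c 0 = 0" 0]
      assms fib_even_Suc zero by auto
qed

lemma odd_fib_value_representable:
  assumes "1 \<le> T" "1 \<le> a" "a \<le> fib (2 * T + 1)"
  shows "\<exists>d. CG_digits T d \<and> 1 \<le> d 0 \<and> odd_fib_value d T = a"
proof -
  have single: "CG_digits 1 ((\<lambda>_. 0)(0 := x + 1)) \<and> 1 \<le> ((\<lambda>_. 0)(0 := x + 1)) 0 \<and>
      (x = 0 \<longrightarrow> zero_after_twos 1 ((\<lambda>_. 0)(0 := x + 1))) \<and>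
      odd_fib_value ((\<lambda>_. 0)(0 := x + 1)) 1 = x + 1" if "x < 2" for x
    using that CG_digits_single[of "x + 1"] by (simp add: zero_after_twos_def digit_sum_def)
  have "\<exists>d. CG_digits T d \<and> 1 \<le> d 0 \<and> odd_fib_value d T = (a - 1) + 1"
  proof (rule digit_sum_greedy[where u = "\<lambda>i. fib (2 * i)"])
    fix x :: nat
    assume "x < fib (2 * 1 + 1)"
    then have "x < 2" by (simp add: numeral_3_eq_3)
    with single show "\<exists>c. CG_digits 1 c \<and> 1 \<le> c 0 \<and> odd_fib_value c 1 = x + 1" by blast
  next
    fix x :: nat
    assume "x < fib (2 * 1)"
    with single[of 0] show "\<exists>c. CG_digits 1 c \<and> 1 \<le> c 0 \<and> zero_after_twos 1 c \<and>
        odd_fib_value c 1 = x + 1" by auto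
  qed (use assms in auto)
  with assms show ?thesis by simp
qed

lemma CG_value_bound:
  assumes "1 \<le> k" "CG_digits k c"
  shows "CG_value c k < fib (2 * k)"
    and "zero_after_twos k c \<Longrightarrow> CG_value c k < fib (2 * k - 1)"
proof -
  have "\<forall>c. CG_digits k c \<longrightarrow>
      CG_value c k < fib (2 * k) \<and> (zero_after_twos k c \<longrightarrow> CG_value c k < fib (2 * k - 1))"
    using \<open>1 \<le> k\<close>
  proof (induction k rule: nat_induct_at_least)
    case base
    then show ?case by (simp add: digit_sum_def)
  next
    case (Suc k)
    show ?case
    proof (intro allI impI)
      fix c assume c: "CG_digits (Suc k) c"
      define c0 where "c0 = c(k := 0)"
      have c0: "CG_digits k c0" unfolding c0_def using CG_digits_drop_top[OF c] .
      have "c = c0(k := c k)" unfolding c0_def by simp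
      then have sum_split: "CG_value c (Suc k) = CG_value c0 k + c k * fib (2 * k)"
        using digit_sum_update[of k c0] c0 unfolding CG_digits_def by metis
      have IH: "CG_value c0 k < fib (2 * k)" "zero_after_twos k c \<Longrightarrow> CG_value c0 k < fib (2 * k - 1)"
        using Suc.IH c0 zero_after_twos_update[of k k c 0] unfolding c0_def by auto
      have "c k \<le> 2" using CG_digits_le_2[OF c] .
      moreover have "c k = 2 \<Longrightarrow> zero_after_twos k c"
        using c zero_after_twos_of_two unfolding CG_digits_def by blast
      ultimately show "CG_value c (Suc k) < fib (2 * Suc k) \<and>
          (zero_after_twos (Suc k) c \<longrightarrow> CG_value c (Suc k) < fib (2 * Suc k - 1))"
        using sum_split IH fib_even_Suc[OF Suc.hyps] zero_after_twos_Suc_iff[of k c]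
        by (auto simp: le_Suc_eq numeral_2_eq_2)
    qed
  qed
  with assms show "CG_value c k < fib (2 * k)" "zero_after_twos k c \<Longrightarrow> CG_value c k < fib (2 * k - 1)"
    by auto
qed

lemma CG_value_inj:
  assumes "CG_digits K c" "CG_digits K c'" "c 0 = 0" "c' 0 = 0" "CG_value c K = CG_value c' K"
  shows "c = c'"
  using assms
proof (induction K arbitrary: c c')
  case 0
  then show ?case by (auto simp: CG_digits_def)
next
  case (Suc K)
  define c0 c0' where "c0 = c(K := 0)" and "c0' = c'(K := 0)"
  have digits: "CG_digits K c0" "CG_digits K c0'"
    unfolding c0_def c0'_def using CG_digits_drop_top Suc.prems by blast+
  have restore: "c0(K := c K) = c" "c0'(K := c' K) = c'" unfolding c0_def c0'_def by simp_all
  have "\<forall>i\<ge>K. c0 i = 0" "\<forall>i\<ge>K. c0' i = 0" using digits unfolding CG_digits_def by blast+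
  then have sum_split: "CG_value c (Suc K) = CG_value c0 K + c K * fib (2 * K)"
      "CG_value c' (Suc K) = CG_value c0' K + c' K * fib (2 * K)"
    using digit_sum_update[of K c0 _ "c K"] digit_sum_update[of K c0' _ "c' K"] restore by simp_all
  have top_digit: "c K = c' K"
  proof (cases "K = 0")
    case True
    with Suc.prems show ?thesis by simp
  next
    case False
    then have "CG_value c0 K < fib (2 * K)" "CG_value c0' K < fib (2 * K)" "0 < fib (2 * K)"
      using CG_value_bound digits by (auto simp: fib_neq_0_nat)
    then have "c K = CG_value c (Suc K) div fib (2 * K)" "c' K = CG_value c' (Suc K) div fib (2 * K)"
      using sum_split by simp_all
    with Suc.prems(5) show ?thesis by simp
  qed
  have "CG_value c0 K = CG_value c0' K" using sum_split Suc.prems(5) top_digit by simp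
  moreover have "c0 0 = 0" "c0' 0 = 0" using Suc.prems(3,4) unfolding c0_def c0'_def by simp_all
  ultimately have "c0 = c0'" using Suc.IH[OF digits] by blast
  have "c = c0(K := c K)" using restore by simp
  also have "\<dots> = c0'(K := c' K)" using \<open>c0 = c0'\<close> top_digit by simp
  also have "\<dots> = c'" using restore by simp
  finally show ?case .
qed

lemma support_subset_lessThan:
  fixes c :: "nat \<Rightarrow> nat"
  shows "\<forall>i\<ge>K. c i = 0 \<Longrightarrow> {i. c i \<noteq> 0} \<subseteq> {..<K}"
  by (auto simp: not_less[symmetric])

lemma digit_sum_eq_support_sum:
  assumes "\<forall>i\<ge>K. c i = 0"
  shows "digit_sum w c K = (\<Sum>i\<in>{i. c i \<noteq> 0}. c i * w i)"
  unfolding digit_sum_def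
proof (rule sum.mono_neutral_right)
  show "{i. c i \<noteq> 0} \<subseteq> {..<K}" using support_subset_lessThan[OF assms] .
qed auto

lemma CG_rep_iff_digits: "CG_rep n c \<longleftrightarrow> (\<exists>K. CG_digits K c \<and> c 0 = 0 \<and> CG_value c K = n)"
proof
  assume rep: "CG_rep n c"
  then have "finite {i. c i \<noteq> 0}" by (simp add: CG_rep_def)
  then obtain K where "\<forall>i\<in>{i. c i \<noteq> 0}. i < K" unfolding finite_nat_set_iff_bounded by blast
  then have zeros: "\<forall>i\<ge>K. c i = 0" by auto
  have "CG_admissible c" "c 0 = 0" using rep by (simp_all add: CG_rep_def CG_admissible_def)
  moreover have "CG_value c K = n"
    using rep digit_sum_eq_support_sum[OF zeros] by (simp add: CG_rep_def)
  ultimately show "\<exists>K. CG_digits K c \<and> c 0 = 0 \<and> CG_value c K = n"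
    using zeros unfolding CG_digits_def by blast
next
  assume "\<exists>K. CG_digits K c \<and> c 0 = 0 \<and> CG_value c K = n"
  then obtain K where K: "CG_admissible c" "\<forall>i\<ge>K. c i = 0" "c 0 = 0" "CG_value c K = n"
    unfolding CG_digits_def by auto
  then have "finite {i. c i \<noteq> 0}" using support_subset_lessThan[OF K(2)] finite_subset by auto
  with K show "CG_rep n c"
    using digit_sum_eq_support_sum[OF K(2)] by (simp add: CG_rep_def CG_admissible_def)
qed

lemma CG_decomp_eqI:
  assumes "CG_digits K c" "c 0 = 0"
  shows "CG_decomp (CG_value c K) = c"
  unfolding CG_decomp_def
proof (rule the_equality)
  show "CG_rep (CG_value c K) c" using assms CG_rep_iff_digits by blast
next
  fix c' assume "CG_rep (CG_value c K) c'"
  then obtain K' where K': "CG_digits K' c'" "c' 0 = 0" "CG_value c' K' = CG_value c K"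
    using CG_rep_iff_digits by blast
  define M where "M = max K K'"
  have "CG_digits M c" "CG_digits M c'" using assms K' CG_digits_mono unfolding M_def by auto
  moreover have "CG_value c' M = CG_value c M"
    using digit_sum_eq_lessThan[of K' c' M] digit_sum_eq_lessThan[of K c M] assms(1) K'
    unfolding M_def CG_digits_def by simp
  ultimately show "c' = c" using CG_value_inj[of M c' c] assms K' by simp
qed

lemma less_fib_Suc_Suc: "n < fib (Suc (Suc n))"
proof (induction n)
  case (Suc n)
  have "0 < fib (Suc n)" by (simp add: fib_neq_0_nat)
  with Suc show ?case by simp
qed simp

lemma CG_decomp_digits:
  "\<exists>K. CG_digits K (CG_decomp n) \<and> CG_decomp n 0 = 0 \<and> CG_value (CG_decomp n) K = n"
proof -
  have "n < fib (2 * Suc n)"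
    using less_fib_Suc_Suc[of n] fib_mono[of "Suc (Suc n)" "2 * Suc n"] by simp
  then obtain c where "CG_digits (Suc n) c" "c 0 = 0" "CG_value c (Suc n) = n"
    using CG_value_representable[of "Suc n" n] by auto
  then show ?thesis using CG_decomp_eqI by metis
qed

lemma phi_squared: "phi\<^sup>2 = phi + 1"
proof -
  have "(sqrt 5)\<^sup>2 = 5" by simp
  then show ?thesis unfolding phi_def by (simp add: power2_eq_square field_simps)
qed

lemma phi_gt_1: "1 < phi" and phi_less_2: "phi < 2"
proof -
  have "2 < sqrt 5" by (rule real_less_rsqrt) simp
  moreover have "sqrt 5 < 3" by (rule real_sqrt_less_iff[THEN iffD2, of 5 9, simplified])
  ultimately show "1 < phi" "phi < 2" unfolding phi_def by auto
qed

lemma fib_Suc_minus_phi_fib: "real (fib (Suc n)) - phi * real (fib n) = (1 - phi) ^ n"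
proof (induction n)
  case (Suc n)
  have phi_phi: "phi * (phi * x) = x + phi * x" for x
    using phi_squared by (simp add: power2_eq_square algebra_simps flip: mult.assoc)
  have "real (fib (Suc (Suc n))) - phi * real (fib (Suc n)) =
      (1 - phi) * (real (fib (Suc n)) - phi * real (fib n))"
    by (simp add: algebra_simps phi_phi)
  with Suc show ?case by simp
qed simp

(* Since 2 - phi = phi^(-2), this is the sum of d t * phi^(-2t). *)
definition golden_value :: "(nat \<Rightarrow> nat) \<Rightarrow> nat \<Rightarrow> real" where
  "golden_value d T = (\<Sum>t<T. real (d t) * (2 - phi) ^ t)"

lemma golden_value_eq: "real (odd_fib_value d T) - phi * real (CG_value d T) = golden_value d T"
proof -
  have "(1 - phi)\<^sup>2 = 2 - phi" using phi_squared by (simp add: power2_eq_square algebra_simps)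
  then have pow: "(1 - phi) ^ (2 * t) = (2 - phi) ^ t" for t by (simp only: power_mult)
  have "real (d t * fib (2 * t + 1)) - phi * real (d t * fib (2 * t)) = real (d t) * (2 - phi) ^ t"
    for t
  proof -
    have "real (d t * fib (2 * t + 1)) - phi * real (d t * fib (2 * t)) =
        real (d t) * (real (fib (Suc (2 * t))) - phi * real (fib (2 * t)))"
      by (simp add: algebra_simps)
    also have "\<dots> = real (d t) * (2 - phi) ^ t" using fib_Suc_minus_phi_fib[of "2 * t"] pow by simp
    finally show ?thesis .
  qed
  then show ?thesis
    unfolding digit_sum_def golden_value_def of_nat_sum sum_distrib_left sum_subtractf[symmetric]
    by simp
qed

lemma golden_value_Suc:
  "golden_value d (Suc T) = real (d 0) + (2 - phi) * golden_value (\<lambda>t. d (Suc t)) T"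
  unfolding golden_value_def sum.lessThan_Suc_shift by (simp add: sum_distrib_left mult_ac)

lemma golden_value_term_le: "t < T \<Longrightarrow> real (d t) * (2 - phi) ^ t \<le> golden_value d T"
  unfolding golden_value_def using phi_less_2
  by (intro member_le_sum) auto

lemma zero_before_twos_Suc:
  assumes "d 0 \<noteq> 0" "zero_before_twos d"
  shows "zero_before_twos (\<lambda>t. d (Suc t))"
  unfolding zero_before_twos_def
proof (intro allI impI)
  fix i assume "d (Suc i) = 2"
  then obtain j where "j < Suc i" "d j = 0" using assms(2) unfolding zero_before_twos_def by blast
  moreover from this obtain j' where "j = Suc j'" using assms(1) by (cases j) auto
  ultimately show "\<exists>j<i. d (Suc j) = 0" by auto
qed

lemma zero_before_twos_after_two:
  assumes "CG_admissible d" "d 0 = 2"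
  shows "zero_before_twos (\<lambda>t. d (Suc t))"
  unfolding zero_before_twos_def
proof (intro allI impI)
  fix i assume "d (Suc i) = 2"
  then obtain l where "0 < l" "l < Suc i" "d l = 0"
    using assms unfolding CG_admissible_def by blast
  moreover from this obtain l' where "l = Suc l'" by (cases l) auto
  ultimately show "\<exists>j<i. d (Suc j) = 0" by auto
qed

lemma golden_value_less:
  assumes "CG_digits T d"
  shows "golden_value d T < phi\<^sup>2" and "zero_before_twos d \<Longrightarrow> golden_value d T < phi"
proof -
  have q: "0 < 2 - phi" "(2 - phi) * phi\<^sup>2 = 1" "(2 - phi) * phi = phi - 1"
    using phi_less_2 phi_squared by (simp_all add: power2_eq_square algebra_simps)
  have "\<forall>d. CG_digits T d \<longrightarrow>
      golden_value d T < phi\<^sup>2 \<and> (zero_before_twos d \<longrightarrow> golden_value d T < phi)"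
  proof (induction T)
    case 0
    then show ?case using phi_gt_1 phi_squared by (simp add: golden_value_def)
  next
    case (Suc T)
    show ?case
    proof (intro allI impI)
      fix d assume d: "CG_digits (Suc T) d"
      define d' where "d' = (\<lambda>t. d (Suc t))"
      have "CG_digits T d'"
        using d CG_admissible_shift[of d 1] unfolding CG_digits_def d'_def by simp
      then have IH: "(2 - phi) * golden_value d' T < 1"
          "zero_before_twos d' \<Longrightarrow> (2 - phi) * golden_value d' T < phi - 1"
        using Suc.IH mult_strict_left_mono[OF _ q(1)] q by metis+
      have sum_split: "golden_value d (Suc T) = real (d 0) + (2 - phi) * golden_value d' T"
        unfolding d'_def by (rule golden_value_Suc)
      have admissible: "CG_admissible d" using d unfolding CG_digits_def by blast
      consider "d 0 = 0" | "d 0 = 1" | "d 0 = 2" using CG_digits_le_2[OF d, of 0] by linarith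
      then show "golden_value d (Suc T) < phi\<^sup>2 \<and>
          (zero_before_twos d \<longrightarrow> golden_value d (Suc T) < phi)"
      proof cases
        case 1
        then show ?thesis using sum_split IH(1) phi_gt_1 phi_squared by auto
      next
        case 2
        then have "zero_before_twos d \<Longrightarrow> zero_before_twos d'"
          unfolding d'_def using zero_before_twos_Suc by simp
        then show ?thesis using 2 sum_split IH phi_gt_1 phi_squared by auto
      next
        case 3
        then have "zero_before_twos d'" "\<not> zero_before_twos d"
          unfolding d'_def zero_before_twos_def[of d]
          using zero_before_twos_after_two[OF admissible] by auto
        then show ?thesis using 3 sum_split IH(2) phi_squared by auto
      qed
    qed
  qed
  with assms show "golden_value d T < phi\<^sup>2" "zero_before_twos d \<Longrightarrow> golden_value d T < phi"
    by auto
qed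

lemma CG_digits_nonzero_less: "CG_digits K c \<Longrightarrow> c i \<noteq> 0 \<Longrightarrow> i < K"
  unfolding CG_digits_def by (meson leI)

lemma CG_tail_pair_cases:
  assumes "CG_digits T d" "1 \<le> d 0"
  shows "odd_fib_value d T = 1 \<and> CG_value d T = 0 \<or>
    2 \<le> odd_fib_value d T \<and> CG_value d T = nat \<lfloor>real (odd_fib_value d T - 1) / phi\<rfloor>"
proof (cases "d 0 = 1 \<and> (\<forall>t>0. d t = 0)")
  case True
  then have zeros: "\<forall>i\<ge>1. d i = 0" by auto
  have "1 \<le> T" using CG_digits_nonzero_less[OF assms(1), of 0] assms(2) by simp
  then have "digit_sum w d T = d 0 * w 0" for w
    using digit_sum_eq_lessThan[OF zeros, of T w] by (simp add: digit_sum_def)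
  with True show ?thesis by simp
next
  case False
  define A B where "A = odd_fib_value d T" and "B = CG_value d T"
  have "1 < golden_value d T"
  proof (cases "d 0 = 2")
    case True
    have "0 < T" using CG_digits_nonzero_less[OF assms(1), of 0] True by simp
    then show ?thesis using True golden_value_term_le[of 0 T d] by simp
  next
    case d0: False
    with False assms(2) CG_digits_le_2[OF assms(1), of 0] obtain t where "0 < t" "d t \<noteq> 0"
      by auto
    then have "t < T" using CG_digits_nonzero_less[OF assms(1)] by blast
    have "real (d 0) + real (d t) * (2 - phi) ^ t = (\<Sum>i\<in>{0, t}. real (d i) * (2 - phi) ^ i)"
      using \<open>0 < t\<close> by simp
    also have "\<dots> \<le> golden_value d T"
      unfolding golden_value_def using \<open>t < T\<close> phi_less_2 by (intro sum_mono2) auto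
    finally have "real (d 0) + real (d t) * (2 - phi) ^ t \<le> golden_value d T" .
    moreover have "0 < real (d t) * (2 - phi) ^ t" using \<open>d t \<noteq> 0\<close> phi_less_2 by simp
    ultimately show ?thesis using assms(2) by linarith
  qed
  moreover have "golden_value d T < phi + 1" using golden_value_less(1)[OF assms(1)] phi_squared by simp
  moreover have "real A - phi * real B = golden_value d T"
    unfolding A_def B_def by (rule golden_value_eq)
  ultimately have bounds: "1 < real A - phi * real B" "real A - phi * real B < phi + 1"
    by linarith+
  have "0 \<le> phi * real B" using phi_gt_1 by simp
  with bounds(1) have "1 < real A" by linarith
  then have "2 \<le> A" by simp
  have "\<lfloor>real (A - 1) / phi\<rfloor> = int B"
  proof (rule floor_unique)
    show "real_of_int (int B) \<le> real (A - 1) / phi"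
      using bounds(1) phi_gt_1 \<open>2 \<le> A\<close> by (simp add: of_nat_diff pos_le_divide_eq algebra_simps)
    show "real (A - 1) / phi < real_of_int (int B) + 1"
      using bounds(2) phi_gt_1 \<open>2 \<le> A\<close> by (simp add: of_nat_diff pos_divide_less_eq algebra_simps)
  qed
  with \<open>2 \<le> A\<close> show ?thesis unfolding A_def B_def by simp
qed

(* A block of digits whose lowest nonzero index is k contributes A F_2k + B F_2k-1 for a pair
  (A, B) of this set; see CG_value_shift_digits. *)
definition CG_tail_pairs :: "(nat \<times> nat) set" where
  "CG_tail_pairs = {(odd_fib_value d T, CG_value d T) | d T. CG_digits T d \<and> 1 \<le> d 0}"

lemma CG_tail_pairsI: "CG_digits T d \<Longrightarrow> 1 \<le> d 0 \<Longrightarrow> (odd_fib_value d T, CG_value d T) \<in> CG_tail_pairs"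
  unfolding CG_tail_pairs_def by blast

lemma CG_tail_pairs_eq:
  "CG_tail_pairs = insert (1, 0) (range (\<lambda>m. (m + 2, nat \<lfloor>real (m + 1) / phi\<rfloor>)))"
proof (intro equalityI subsetI)
  fix p assume "p \<in> CG_tail_pairs"
  then obtain d T where d: "CG_digits T d" "1 \<le> d 0" "p = (odd_fib_value d T, CG_value d T)"
    unfolding CG_tail_pairs_def by blast
  from CG_tail_pair_cases[OF d(1,2)] show "p \<in> insert (1, 0) (range (\<lambda>m. (m + 2, nat \<lfloor>real (m + 1) / phi\<rfloor>)))"
  proof
    assume "odd_fib_value d T = 1 \<and> CG_value d T = 0"
    with d(3) show ?thesis by simp
  next
    assume A: "2 \<le> odd_fib_value d T \<and> CG_value d T = nat \<lfloor>real (odd_fib_value d T - 1) / phi\<rfloor>"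
    then have "p = (odd_fib_value d T - 2 + 2, nat \<lfloor>real (odd_fib_value d T - 2 + 1) / phi\<rfloor>)"
      using d(3) by (simp add: Suc_diff_Suc numeral_2_eq_2)
    then show ?thesis by blast
  qed
next
  fix p assume "p \<in> insert (1, 0) (range (\<lambda>m. (m + 2, nat \<lfloor>real (m + 1) / phi\<rfloor>)))"
  then consider "p = (1, 0)" | m where "p = (m + 2, nat \<lfloor>real (m + 1) / phi\<rfloor>)" by blast
  then show "p \<in> CG_tail_pairs"
  proof cases
    case 1
    have "odd_fib_value ((\<lambda>_. 0)(0 := 1)) 1 = 1" "CG_value ((\<lambda>_. 0)(0 := 1)) 1 = 0"
      by (simp_all add: digit_sum_def)
    with 1 show ?thesis using CG_tail_pairsI[OF CG_digits_single, of 1] by simp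
  next
    case 2
    have "m + 2 < fib (Suc (Suc (m + 2)))" by (rule less_fib_Suc_Suc)
    also have "\<dots> \<le> fib (2 * (m + 2) + 1)" by (rule fib_mono) simp
    finally obtain d where d: "CG_digits (m + 2) d" "1 \<le> d 0" "odd_fib_value d (m + 2) = m + 2"
      using odd_fib_value_representable[of "m + 2" "m + 2"] by auto
    then have "CG_value d (m + 2) = nat \<lfloor>real (m + 1) / phi\<rfloor>"
      using CG_tail_pair_cases[OF d(1,2)] by simp
    with 2 d show ?thesis using CG_tail_pairsI[OF d(1,2)] by simp
  qed
qed

lemma CG_value_shift_digits:
  assumes "1 \<le> k"
  shows "CG_value (shift_digits k d) (k + T) =
    odd_fib_value d T * fib (2 * k) + CG_value d T * fib (2 * k - 1)"
proof (induction T)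
  case 0
  then show ?case by (simp add: digit_sum_def shift_digits_def)
next
  case (Suc T)
  have "2 * (k + T) = Suc (2 * T + (2 * k - 1))" using assms by simp
  then have fib_sum: "fib (2 * (k + T)) = fib (2 * k) * fib (2 * T + 1) + fib (2 * k - 1) * fib (2 * T)"
    using fib_add[of "2 * T" "2 * k - 1"] assms by (simp add: ac_simps)
  have "CG_value (shift_digits k d) (k + Suc T) =
      CG_value (shift_digits k d) (k + T) + d T * fib (2 * (k + T))"
    by (simp add: digit_sum_def shift_digits_def)
  with Suc fib_sum show ?case by (simp add: digit_sum_def algebra_simps)
qed

lemma CG_digits_concat:
  assumes c: "CG_digits N c" and d: "CG_digits T d" and "N < k"
  shows "CG_digits (k + T) (\<lambda>i. c i + shift_digits k d i)"
proof -
  define e where "e = (\<lambda>i. c i + shift_digits k d i)"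
  have low: "e i = c i" if "i < k" for i using that unfolding e_def shift_digits_def by simp
  have high: "e i = d (i - k)" if "k \<le> i" for i
    using that c \<open>N < k\<close> unfolding e_def shift_digits_def CG_digits_def by simp
  have "e N = 0" using low[of N] c \<open>N < k\<close> unfolding CG_digits_def by simp
  have "CG_admissible e"
    unfolding CG_admissible_def
  proof (intro conjI allI impI)
    fix i show "e i \<le> 2" using c d low high CG_digits_le_2 by (cases "i < k") auto
  next
    fix i j assume ij: "i < j" and two: "e i = 2" "e j = 2"
    show "\<exists>l. i < l \<and> l < j \<and> e l = 0"
    proof (cases "j < k")
      case True
      with ij two low have "c i = 2" "c j = 2" by auto
      with ij obtain l where "i < l" "l < j" "c l = 0"
        using c unfolding CG_digits_def CG_admissible_def by blast
      with True low show ?thesis by (intro exI[of _ l]) auto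
    next
      case j_high: False
      show ?thesis
      proof (cases "i < k")
        case True
        with two low have "c i \<noteq> 0" by simp
        then have "i < N" using CG_digits_nonzero_less[OF c] by blast
        with \<open>e N = 0\<close> \<open>N < k\<close> j_high show ?thesis by (intro exI[of _ N]) auto
      next
        case False
        with ij j_high two high have "d (i - k) = 2" "d (j - k) = 2" "i - k < j - k" by auto
        then obtain l where "i - k < l" "l < j - k" "d l = 0"
          using d unfolding CG_digits_def CG_admissible_def by blast
        with False high[of "l + k"] show ?thesis by (intro exI[of _ "l + k"]) auto
      qed
    qed
  qed
  moreover have "\<forall>i\<ge>k + T. e i = 0"
    using c d high \<open>N < k\<close> unfolding CG_digits_def by auto
  ultimately show ?thesis unfolding CG_digits_def e_def by blast
qed

lemma CG_value_eq_tail_pair: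
  assumes h: "CG_digits K h" and "\<forall>i\<le>N. h i = 0" "h i \<noteq> 0"
  shows "\<exists>k A B. N < k \<and> (A, B) \<in> CG_tail_pairs \<and>
    CG_value h K = A * fib (2 * k) + B * fib (2 * k - 1)"
proof -
  define k where "k = (LEAST i. h i \<noteq> 0)"
  have "h k \<noteq> 0" unfolding k_def using assms(3) by (rule LeastI)
  have below: "h i = 0" if "i < k" for i
    using not_less_Least[of i "\<lambda>i. h i \<noteq> 0"] that unfolding k_def by simp
  have "N < k" using \<open>h k \<noteq> 0\<close> assms(2) by (meson leI)
  have "k < K" using CG_digits_nonzero_less[OF h \<open>h k \<noteq> 0\<close>] .
  define d where "d = (\<lambda>t. h (t + k))"
  have "shift_digits k d = h"
    unfolding shift_digits_def d_def using below by (auto simp: fun_eq_iff)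
  moreover have "CG_digits (K - k) d"
    using h CG_admissible_shift[of h k] unfolding CG_digits_def d_def by auto
  moreover have "1 \<le> d 0" using \<open>h k \<noteq> 0\<close> unfolding d_def by simp
  ultimately show ?thesis
    using CG_value_shift_digits[of k d "K - k"] CG_tail_pairsI \<open>N < k\<close> \<open>k < K\<close> by fastforce
qed

lemma CG_decomp_zero_at_cases:
  assumes "1 \<le> N" "CG_decomp n N = 0"
  shows "n < fib (2 * N) \<or> (\<exists>j k A B. j < fib (2 * N) \<and> N < k \<and> (A, B) \<in> CG_tail_pairs \<and>
    n = j + A * fib (2 * k) + B * fib (2 * k - 1))"
proof -
  define c where "c = CG_decomp n"
  from CG_decomp_digits[of n] obtain K0 where K0: "CG_digits K0 c" "CG_value c K0 = n"
    unfolding c_def by auto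
  define K where "K = max K0 (Suc N)"
  have "K0 \<le> K" "N < K" unfolding K_def by simp_all
  have adm: "CG_admissible c" and zeros: "\<forall>i\<ge>K. c i = 0"
    using CG_digits_mono[OF K0(1) \<open>K0 \<le> K\<close>] unfolding CG_digits_def by simp_all
  have "CG_value c K = n"
    using digit_sum_eq_lessThan[of K0 c K] K0 \<open>K0 \<le> K\<close> unfolding CG_digits_def by simp
  define lo hi where "lo = (\<lambda>i. if i < N then c i else 0)" and "hi = (\<lambda>i. if N < i then c i else 0)"
  have "c = (\<lambda>i. lo i + hi i)"
    using assms(2) unfolding lo_def hi_def c_def by (auto simp: fun_eq_iff)
  then have "CG_value c K = CG_value lo K + CG_value hi K" by (simp add: digit_sum_add)
  moreover have lo: "CG_digits N lo"
    unfolding lo_def CG_digits_def using CG_admissible_restrict[OF adm] by simp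
  moreover have "CG_value lo K = CG_value lo N"
    using digit_sum_eq_lessThan[of N lo K] \<open>N < K\<close> unfolding lo_def by simp
  moreover have hi: "CG_digits K hi"
    unfolding hi_def CG_digits_def using CG_admissible_restrict[OF adm] zeros by simp
  ultimately have n: "n = CG_value lo N + CG_value hi K" using \<open>CG_value c K = n\<close> by simp
  have j: "CG_value lo N < fib (2 * N)" using CG_value_bound(1)[OF assms(1) lo(1)] .
  show ?thesis
  proof (cases "\<exists>i. hi i \<noteq> 0")
    case True
    then obtain i where "hi i \<noteq> 0" by blast
    moreover have "\<forall>i\<le>N. hi i = 0" unfolding hi_def by simp
    ultimately obtain k A B where "N < k" "(A, B) \<in> CG_tail_pairs"
        "CG_value hi K = A * fib (2 * k) + B * fib (2 * k - 1)"
      using CG_value_eq_tail_pair[OF hi] by blast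
    with n j show ?thesis
      by (intro disjI2 exI[of _ "CG_value lo N"] exI[of _ k] exI[of _ A] exI[of _ B]) simp
  next
    case False
    then have "CG_value hi K = 0" by (simp add: digit_sum_def)
    with n j show ?thesis by simp
  qed
qed

lemma CG_decomp_zero_at_low:
  assumes "1 \<le> N" "n < fib (2 * N)"
  shows "CG_decomp n N = 0"
proof -
  obtain c where "CG_digits N c" "c 0 = 0" "CG_value c N = n"
    using CG_value_representable assms by blast
  then show ?thesis using CG_decomp_eqI unfolding CG_digits_def by fastforce
qed

lemma CG_decomp_zero_at_tail:
  assumes "1 \<le> N" "j < fib (2 * N)" "N < k" "(A, B) \<in> CG_tail_pairs"
  shows "0 < j + A * fib (2 * k) + B * fib (2 * k - 1)"
    and "CG_decomp (j + A * fib (2 * k) + B * fib (2 * k - 1)) N = 0"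
proof -
  have "1 \<le> A" using assms(4) unfolding CG_tail_pairs_eq by auto
  with assms(3) show "0 < j + A * fib (2 * k) + B * fib (2 * k - 1)" by (simp add: fib_neq_0_nat)
  obtain c where c: "CG_digits N c" "c 0 = 0" "CG_value c N = j"
    using CG_value_representable assms(1,2) by blast
  obtain d T where d: "CG_digits T d" "A = odd_fib_value d T" "B = CG_value d T"
    using assms(4) unfolding CG_tail_pairs_def by blast
  define e where "e = (\<lambda>i. c i + shift_digits k d i)"
  have e: "CG_digits (k + T) e" unfolding e_def using CG_digits_concat c(1) d(1) assms(3) .
  have "e 0 = 0" "e N = 0"
    using c(1,2) assms(1,3) unfolding e_def shift_digits_def CG_digits_def by auto
  have "CG_value c (k + T) = j"
    using c digit_sum_eq_lessThan[of N c "k + T"] assms(3) unfolding CG_digits_def by simp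
  then have "CG_value e (k + T) = j + A * fib (2 * k) + B * fib (2 * k - 1)"
    using CG_value_shift_digits[of k d T] assms(1,3) d unfolding e_def digit_sum_add by simp
  then show "CG_decomp (j + A * fib (2 * k) + B * fib (2 * k - 1)) N = 0"
    using CG_decomp_eqI[OF e \<open>e 0 = 0\<close>] \<open>e N = 0\<close> by simp
qed

theorem theorem1p3:
  fixes N :: nat
  assumes "N \<ge> 1"
  shows "{n::nat. n > 0 \<and> CG_decomp n N = 0} =
    {1..fib (2*N) - 1} \<union>
    (\<Union>k\<in>{N+1..}.
       {j + fib (2*k) | j. j \<le> fib (2*N) - 1} \<union>
       {j + (m + 2) * fib (2*k) + nat \<lfloor>real (m + 1) / phi\<rfloor> * fib (2*k - 1)
          | j m. j \<le> fib (2*N) - 1})"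
  (is "?L = ?R")
proof (intro set_eqI iffI)
  have fib_pos: "0 < fib (2 * N)" using assms by (simp add: fib_neq_0_nat)
  fix n
  show "n \<in> ?R" if "n \<in> ?L"
  proof -
    from that have "0 < n" "CG_decomp n N = 0" by auto
    from CG_decomp_zero_at_cases[OF assms this(2)] show ?thesis
    proof (elim disjE exE conjE)
      assume "n < fib (2 * N)"
      with \<open>0 < n\<close> show ?thesis by auto
    next
      fix j k A B
      assume "j < fib (2 * N)" and "N < k" and AB: "(A, B) \<in> CG_tail_pairs"
        and n: "n = j + A * fib (2 * k) + B * fib (2 * k - 1)"
      then have j: "j \<le> fib (2 * N) - 1" and k: "k \<in> {N + 1..}" by simp_all
      from AB consider "A = 1" "B = 0" | m where "A = m + 2" "B = nat \<lfloor>real (m + 1) / phi\<rfloor>"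
        unfolding CG_tail_pairs_eq by blast
      then show ?thesis
      proof cases
        case 1
        with n have "n = j + fib (2 * k)" by simp
        with j k show ?thesis by blast
      next
        case (2 m)
        with n have "n = j + (m + 2) * fib (2 * k) + nat \<lfloor>real (m + 1) / phi\<rfloor> * fib (2 * k - 1)"
          by simp
        with j k show ?thesis by blast
      qed
    qed
  qed
  show "n \<in> ?L" if "n \<in> ?R"
  proof -
    have tail: "n \<in> ?L" if "k \<in> {N + 1..}" "j \<le> fib (2 * N) - 1" "(A, B) \<in> CG_tail_pairs"
      "n = j + A * fib (2 * k) + B * fib (2 * k - 1)" for j k A B
      using CG_decomp_zero_at_tail[OF assms, of j k A B] that fib_pos by auto
    from that consider "n \<in> {1..fib (2 * N) - 1}"
      | k j where "k \<in> {N + 1..}" "j \<le> fib (2 * N) - 1" "n = j + fib (2 * k)"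
      | k j m where "k \<in> {N + 1..}" "j \<le> fib (2 * N) - 1"
          "n = j + (m + 2) * fib (2 * k) + nat \<lfloor>real (m + 1) / phi\<rfloor> * fib (2 * k - 1)"
      by blast
    then show ?thesis
    proof cases
      case 1
      with fib_pos have "0 < n" "n < fib (2 * N)" by auto
      then show ?thesis using CG_decomp_zero_at_low[OF assms] by simp
    next
      case (2 k j)
      moreover have "(1, 0) \<in> CG_tail_pairs" unfolding CG_tail_pairs_eq by simp
      ultimately show ?thesis using tail[of k j 1 0] by simp
    next
      case (3 k j m)
      moreover have "(m + 2, nat \<lfloor>real (m + 1) / phi\<rfloor>) \<in> CG_tail_pairs"
        unfolding CG_tail_pairs_eq by simp
      ultimately show ?thesis using tail[of k j "m + 2" "nat \<lfloor>real (m + 1) / phi\<rfloor>"] by simp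
    qed
  qed
qed

end
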